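(* Let $m\in\mathbb N$. Let $\mathbf X=(X_1,\dots,X_n)$ be (possibly dependent) component lifetimes and $\mathbf Y_i=(Y_{i1},\dots,Y_{in})$, $i=1,\dots,m$, be vectors of spare lifetimes, all $X_j$ and $Y_{ij}$ identically distributed as $X$. Let $T_C=\tau(\mathbf Z)$, where $\mathbf Z=(Z_1,\dots,Z_n)$, $Z_j=\max\{X_j,Y_{1j},\dots,Y_{mj}\}$ with $X_j,Y_{1j},\dots,Y_{mj}$ independent (active redundancy at component level), and let $T_S=\max\{\tau(\mathbf X),\tau(\mathbf Y_1),\dots,\tau(\mathbf Y_m)\}$ with $\tau(\mathbf X),\tau(\mathbf Y_1),\dots,\tau(\mathbf Y_m)$ independent (active redundancy at system level), where $\tau$ is a coherent structure and $\tau(\mathbf X),\tau(\mathbf Y_i),\tau(\mathbf Z)$ all have the same domination function $h$; thus $\bar F_{T_C}(x)=h\big(1-(1-\bar F_X(x))^{m+1}\big)$ and $\bar F_{T_S}(x)=1-\big(1-h(\bar F_X(x))\big)^{m+1}$. Then $T_S\underset{c}{\prec}T_C$ (resp. $T_S\underset{c}{\succ}T_C$) holds if and only if $$\left(\frac{(1-h(p))^{m}h'(p)}{1-(1-h(p))^{m+1}}\right)\left(\frac{h\big(1-(1-p)^{m+1}\big)}{(1-p)^{m}h'\big(1-(1-p)^{m+1}\big)}\right)$$ is decreasing (resp. increasing) in $p\in(0,1)$.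
   Context: All random variables are non-negative and absolutely continuous with support $[0,\infty)$. For a random variable $W$: density $f_W$, survival $\bar F_W$, hazard rate $r_W=f_W/\bar F_W$. $U\underset{c}{\prec}V$ means $r_U(x)/r_V(x)$ is increasing in $x\ge0$; $U\underset{c}{\succ}V$ means $V\underset{c}{\prec}U$. The domination function $h:[0,1]\to[0,1]$ of a coherent system whose components have common marginal survival function $\bar G$ is the function (depending on structure and survival copula) with system reliability $h(\bar G(x))$; it is increasing, continuous, $h(0)=0$, $h(1)=1$, assumed differentiable. "Increasing" means non-decreasing, "decreasing" means non-increasing. *)

theory Defs
  imports "HOL-Analysis.Analysis"
begin

text \<open>Lifetime distributions are represented by their survival functions.\<close>

definition density_of :: "(real \<Rightarrow> real) \<Rightarrow> real \<Rightarrow> real" where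
  "density_of S x = - deriv S x"

definition hazard :: "(real \<Rightarrow> real) \<Rightarrow> real \<Rightarrow> real" where
  "hazard S x = density_of S x / S x"

text \<open>U is smaller than V in the convex transform (hazard-ratio) order:
  the ratio of hazard rates is increasing on the positive half-line.\<close>

definition c_less :: "(real \<Rightarrow> real) \<Rightarrow> (real \<Rightarrow> real) \<Rightarrow> bool" where
  "c_less SU SV \<longleftrightarrow>
     (\<forall>x y. 0 < x \<longrightarrow> x \<le> y \<longrightarrow> hazard SU x / hazard SV x \<le> hazard SU y / hazard SV y)"

definition lifetime_survival :: "(real \<Rightarrow> real) \<Rightarrow> bool" where
  "lifetime_survival S \<longleftrightarrow>
     (\<forall>x\<le>0. S x = 1) \<and> isCont S 0 \<and> (S \<longlongrightarrow> 0) at_top \<and>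
     (\<forall>x>0. S differentiable (at x) \<and> deriv S x < 0)"

definition domination_function :: "(real \<Rightarrow> real) \<Rightarrow> bool" where
  "domination_function h \<longleftrightarrow>
     h ` {0..1} \<subseteq> {0..1} \<and> mono_on {0..1} h \<and> continuous_on {0..1} h \<and>
     h 0 = 0 \<and> h 1 = 1 \<and> (\<forall>p\<in>{0..1}. h differentiable (at p within {0..1}))"

definition surv_component_redundancy :: "(real \<Rightarrow> real) \<Rightarrow> nat \<Rightarrow> (real \<Rightarrow> real) \<Rightarrow> real \<Rightarrow> real" where
  "surv_component_redundancy h m F x = h (1 - (1 - F x) ^ (m + 1))"

definition surv_system_redundancy :: "(real \<Rightarrow> real) \<Rightarrow> nat \<Rightarrow> (real \<Rightarrow> real) \<Rightarrow> real \<Rightarrow> real" where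
  "surv_system_redundancy h m F x = 1 - (1 - h (F x)) ^ (m + 1)"

definition ratio_expr :: "(real \<Rightarrow> real) \<Rightarrow> nat \<Rightarrow> real \<Rightarrow> real" where
  "ratio_expr h m p =
     ((1 - h p) ^ m * deriv h p / (1 - (1 - h p) ^ (m + 1))) *
     (h (1 - (1 - p) ^ (m + 1)) / ((1 - p) ^ m * deriv h (1 - (1 - p) ^ (m + 1))))"

end

theory Submission
  imports Defs
begin

text \<open>Both survival functions are of the form \<open>\<phi> \<circ> F\<close>, so by the chain rule the
  hazard rate of \<open>\<phi> \<circ> F\<close> at \<open>x\<close> is \<open>- F'(x) \<phi>'(F x) / \<phi>(F x)\<close>. In a ratio of two such
  hazard rates the factor \<open>F'(x)\<close> cancels, leaving a function of \<open>p = F x\<close> alone;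
  for \<open>\<phi>\<^sub>S p = 1 - (1 - h p)^(m+1)\<close> and \<open>\<phi>\<^sub>C p = h (1 - (1 - p)^(m+1))\<close> this function
  is \<open>ratio_expr h m p\<close>. Since \<open>F\<close> is a decreasing bijection of \<open>(0,\<infinity>)\<close> onto
  \<open>(0,1)\<close>, the hazard ratio increases in \<open>x\<close> exactly when that expression decreases
  in \<open>p\<close>.\<close>

definition parallel_of_systems :: "(real \<Rightarrow> real) \<Rightarrow> nat \<Rightarrow> real \<Rightarrow> real" where
  "parallel_of_systems h m p = 1 - (1 - h p) ^ (m + 1)"

definition system_of_parallels :: "(real \<Rightarrow> real) \<Rightarrow> nat \<Rightarrow> real \<Rightarrow> real" where
  "system_of_parallels h m p = h (1 - (1 - p) ^ (m + 1))"

lemma surv_system_redundancy_eq: "surv_system_redundancy h m F = (\<lambda>x. parallel_of_systems h m (F x))"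
  by (simp add: fun_eq_iff surv_system_redundancy_def parallel_of_systems_def)

lemma surv_component_redundancy_eq:
  "surv_component_redundancy h m F = (\<lambda>x. system_of_parallels h m (F x))"
  by (simp add: fun_eq_iff surv_component_redundancy_def system_of_parallels_def)

lemma lifetime_survival_has_derivative:
  assumes "lifetime_survival F" "0 < x"
  shows "(F has_real_derivative deriv F x) (at x)" and "deriv F x < 0"
  using assms unfolding lifetime_survival_def DERIV_deriv_iff_real_differentiable by simp_all

lemma lifetime_survival_isCont:
  assumes "lifetime_survival F" "0 \<le> x"
  shows "isCont F x"
proof (cases "x = 0")
  case True
  then show ?thesis using assms(1) by (simp add: lifetime_survival_def)
next
  case False
  then show ?thesis
    using assms DERIV_isCont[OF lifetime_survival_has_derivative(1)] by simp
qed

lemma lifetime_survival_strict_antimono: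
  assumes "lifetime_survival F" "0 \<le> x" "x < y"
  shows "F y < F x"
proof (rule DERIV_neg_imp_decreasing_open[OF \<open>x < y\<close>])
  fix z assume "x < z"
  then show "\<exists>d. (F has_real_derivative d) (at z) \<and> d < 0"
    using assms lifetime_survival_has_derivative[of F z] by auto
next
  show "continuous_on {x..y} F"
    using assms lifetime_survival_isCont by (intro continuous_at_imp_continuous_on) auto
qed

lemma lifetime_survival_bounds:
  assumes F: "lifetime_survival F" and "0 < x"
  shows "0 < F x" and "F x < 1"
proof -
  show "F x < 1"
    using F lifetime_survival_strict_antimono[OF F, of 0 x] \<open>0 < x\<close>
    by (simp add: lifetime_survival_def)
  have "\<forall>\<^sub>F z in at_top. F z \<le> F (x + 1)"
    using eventually_ge_at_top[of "x + 1"]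
  proof eventually_elim
    case (elim z)
    then show ?case
      using lifetime_survival_strict_antimono[OF F, of "x + 1" z] \<open>0 < x\<close>
      by (cases "z = x + 1") auto
  qed
  then have "0 \<le> F (x + 1)"
    using F tendsto_upperbound[of F 0 at_top] by (simp add: lifetime_survival_def)
  then show "0 < F x"
    using lifetime_survival_strict_antimono[OF F, of x "x + 1"] \<open>0 < x\<close> by simp
qed

lemma lifetime_survival_surj:
  assumes F: "lifetime_survival F" and "0 < q" "q < 1"
  obtains x where "0 < x" "F x = q"
proof -
  have "\<forall>\<^sub>F x in at_top. F x < q"
    using F \<open>0 < q\<close> by (intro order_tendstoD(2)) (auto simp: lifetime_survival_def)
  then obtain N where "\<And>x. N \<le> x \<Longrightarrow> F x < q"
    unfolding eventually_at_top_linorder by blast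
  then have "0 \<le> max 0 N" "F (max 0 N) < q"
    by auto
  moreover have "F 0 = 1"
    using F by (simp add: lifetime_survival_def)
  ultimately obtain x where "0 \<le> x" "F x = q"
    using IVT2[of F "max 0 N" q 0] lifetime_survival_isCont[OF F] \<open>q < 1\<close> by auto
  with \<open>F 0 = 1\<close> \<open>q < 1\<close> show ?thesis
    by (intro that[of x]) (auto simp: order.order_iff_strict)
qed

lemma lifetime_survival_mono_comp_iff:
  assumes F: "lifetime_survival F"
  shows "(\<forall>x y. 0 < x \<longrightarrow> x \<le> y \<longrightarrow> G (F x) \<le> G (F y)) \<longleftrightarrow>
         (\<forall>p q. 0 < p \<longrightarrow> p \<le> q \<longrightarrow> q < 1 \<longrightarrow> G q \<le> G p)"
proof safe
  fix p q :: real
  assume mono: "\<forall>x y. 0 < x \<longrightarrow> x \<le> y \<longrightarrow> G (F x) \<le> G (F y)"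
    and pq: "0 < p" "p \<le> q" "q < 1"
  obtain x where x: "0 < x" "F x = q"
    using lifetime_survival_surj[OF F, of q] pq by auto
  obtain y where y: "0 < y" "F y = p"
    using lifetime_survival_surj[OF F, of p] pq by auto
  have "x \<le> y"
    using lifetime_survival_strict_antimono[OF F, of y x] x y pq by force
  then show "G q \<le> G p"
    using mono x y by blast
next
  fix x y :: real
  assume anti: "\<forall>p q. 0 < p \<longrightarrow> p \<le> q \<longrightarrow> q < 1 \<longrightarrow> G q \<le> G p"
    and xy: "0 < x" "x \<le> y"
  have "F y \<le> F x"
    using lifetime_survival_strict_antimono[OF F, of x y] xy by (cases "x = y") auto
  then show "G (F x) \<le> G (F y)"
    using anti lifetime_survival_bounds[OF F] xy by simp
qed

definition log_deriv :: "(real \<Rightarrow> real) \<Rightarrow> real \<Rightarrow> real" where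
  "log_deriv \<phi> p = deriv \<phi> p / \<phi> p"

lemma hazard_comp:
  assumes "\<phi> differentiable (at (F x))" "F differentiable (at x)"
  shows "hazard (\<lambda>x. \<phi> (F x)) x = - deriv F x * log_deriv \<phi> (F x)"
proof -
  have "((\<lambda>x. \<phi> (F x)) has_real_derivative deriv \<phi> (F x) * deriv F x) (at x)"
    using assms by (intro DERIV_chain2) (auto simp: DERIV_deriv_iff_real_differentiable)
  then show ?thesis
    by (simp add: DERIV_imp_deriv hazard_def density_of_def log_deriv_def)
qed

lemma c_less_comp_iff:
  assumes F: "lifetime_survival F"
    and \<phi>: "\<forall>p\<in>{0<..<1}. \<phi> differentiable (at p)"
    and \<psi>: "\<forall>p\<in>{0<..<1}. \<psi> differentiable (at p)"
  shows "c_less (\<lambda>x. \<phi> (F x)) (\<lambda>x. \<psi> (F x)) \<longleftrightarrow>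
           (\<forall>p q. 0 < p \<longrightarrow> p \<le> q \<longrightarrow> q < 1 \<longrightarrow>
              log_deriv \<phi> q / log_deriv \<psi> q \<le> log_deriv \<phi> p / log_deriv \<psi> p)"
proof -
  define R where "R p = log_deriv \<phi> p / log_deriv \<psi> p" for p
  have ratio: "hazard (\<lambda>x. \<phi> (F x)) x / hazard (\<lambda>x. \<psi> (F x)) x = R (F x)" if "0 < x" for x
  proof -
    have "F differentiable (at x)" "deriv F x \<noteq> 0" "0 < F x" "F x < 1"
      using lifetime_survival_has_derivative[OF F that] lifetime_survival_bounds[OF F that]
      by (auto simp: real_differentiable_def)
    then show ?thesis
      unfolding R_def by (simp add: hazard_comp \<phi> \<psi>)
  qed
  have "c_less (\<lambda>x. \<phi> (F x)) (\<lambda>x. \<psi> (F x)) \<longleftrightarrow>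
          (\<forall>x y. 0 < x \<longrightarrow> x \<le> y \<longrightarrow> R (F x) \<le> R (F y))"
    unfolding c_less_def by (auto simp: ratio)
  also have "\<dots> \<longleftrightarrow> (\<forall>p q. 0 < p \<longrightarrow> p \<le> q \<longrightarrow> q < 1 \<longrightarrow> R q \<le> R p)"
    using F by (rule lifetime_survival_mono_comp_iff)
  finally show ?thesis
    unfolding R_def .
qed

lemma domination_function_has_derivative:
  assumes "domination_function h" "0 < p" "p < 1"
  shows "(h has_real_derivative deriv h p) (at p)"
proof -
  have "at p within {0..1} = at p"
    using assms by (intro at_within_interior) auto
  then have "h differentiable (at p)"
    using assms unfolding domination_function_def by (metis atLeastAtMost_iff less_eq_real_def)
  then show ?thesis
    using DERIV_deriv_iff_real_differentiable by blast
qed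

lemma domination_function_strict_bounds:
  assumes h: "domination_function h" and h': "\<forall>p\<in>{0<..<1}. deriv h p > 0"
    and "0 < p" "p < 1"
  shows "0 < h p" and "h p < 1"
proof -
  have strict_mono: "h a < h b" if "0 \<le> a" "a < b" "b \<le> 1" for a b
  proof (rule DERIV_pos_imp_increasing_open[OF \<open>a < b\<close>])
    fix x assume "a < x" "x < b"
    then have "0 < x" "x < 1"
      using that by linarith+
    then have "(h has_real_derivative deriv h x) (at x)" "0 < deriv h x"
      using domination_function_has_derivative[OF h] h' by auto
    then show "\<exists>y. (h has_real_derivative y) (at x) \<and> 0 < y"
      by blast
  next
    have "continuous_on {0..1} h"
      using h by (simp add: domination_function_def)
    then show "continuous_on {a..b} h"
      by (rule continuous_on_subset) (use that in auto)
  qed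
  have "h 0 = 0" "h 1 = 1"
    using h by (simp_all add: domination_function_def)
  then show "0 < h p" "h p < 1"
    using strict_mono[of 0 p] strict_mono[of p 1] assms(3,4) by auto
qed

lemma parallel_of_systems_has_derivative:
  assumes "domination_function h" "0 < p" "p < 1"
  shows "(parallel_of_systems h m has_real_derivative
           real (m + 1) * (1 - h p) ^ m * deriv h p) (at p)"
  unfolding parallel_of_systems_def[abs_def]
  using domination_function_has_derivative[OF assms]
  by (auto intro!: derivative_eq_intros simp del: power_Suc)

lemma system_of_parallels_has_derivative:
  assumes h: "domination_function h" and "0 < p" "p < 1"
  shows "(system_of_parallels h m has_real_derivative
           deriv h (1 - (1 - p) ^ (m + 1)) * (real (m + 1) * (1 - p) ^ m)) (at p)"
proof -
  have "0 < 1 - (1 - p) ^ (m + 1)" "1 - (1 - p) ^ (m + 1) < 1"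
    using assms power_Suc_less_one[of "1 - p" m] by auto
  moreover have "((\<lambda>p. 1 - (1 - p) ^ (m + 1)) has_real_derivative real (m + 1) * (1 - p) ^ m) (at p)"
    by (auto intro!: derivative_eq_intros simp del: power_Suc)
  ultimately show ?thesis
    unfolding system_of_parallels_def[abs_def]
    by (intro DERIV_chain2[where f = h] domination_function_has_derivative[OF h])
qed

lemma parallel_of_systems_differentiable:
  assumes "domination_function h"
  shows "\<forall>p\<in>{0<..<1}. parallel_of_systems h m differentiable (at p)"
  using parallel_of_systems_has_derivative[OF assms]
  by (metis greaterThanLessThan_iff real_differentiable_def)

lemma system_of_parallels_differentiable:
  assumes "domination_function h"
  shows "\<forall>p\<in>{0<..<1}. system_of_parallels h m differentiable (at p)"
  using system_of_parallels_has_derivative[OF assms]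
  by (metis greaterThanLessThan_iff real_differentiable_def)

lemma ratio_expr_eq:
  "((real (m + 1) * (1 - h p) ^ m * deriv h p) / parallel_of_systems h m p) /
   ((deriv h (1 - (1 - p) ^ (m + 1)) * (real (m + 1) * (1 - p) ^ m)) / system_of_parallels h m p)
     = ratio_expr h m p"
  unfolding ratio_expr_def parallel_of_systems_def system_of_parallels_def
  by (simp add: mult_ac)

lemma log_deriv_ratio_eq_ratio_expr:
  assumes "domination_function h" "0 < p" "p < 1"
  shows "log_deriv (parallel_of_systems h m) p / log_deriv (system_of_parallels h m) p
           = ratio_expr h m p"
  unfolding log_deriv_def
    DERIV_imp_deriv[OF parallel_of_systems_has_derivative[OF assms]]
    DERIV_imp_deriv[OF system_of_parallels_has_derivative[OF assms]]
  by (rule ratio_expr_eq)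

lemma log_deriv_ratio_eq_inverse_ratio_expr:
  assumes "domination_function h" "0 < p" "p < 1"
  shows "log_deriv (system_of_parallels h m) p / log_deriv (parallel_of_systems h m) p
           = inverse (ratio_expr h m p)"
  by (simp add: log_deriv_ratio_eq_ratio_expr[OF assms, symmetric])

lemma ratio_expr_pos:
  assumes h: "domination_function h" and h': "\<forall>p\<in>{0<..<1}. deriv h p > 0"
    and "0 < p" "p < 1"
  shows "0 < ratio_expr h m p"
proof -
  define g where "g = 1 - (1 - p) ^ (m + 1)"
  have g: "0 < g" "g < 1"
    using assms power_Suc_less_one[of "1 - p" m] unfolding g_def by auto
  have hp: "0 < h p" "h p < 1"
    using domination_function_strict_bounds[OF h h'] assms by auto
  have "(1 - h p) ^ (m + 1) < 1"
    using hp power_Suc_less_one[of "1 - h p" m] by simp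
  moreover have "0 < h g"
    using domination_function_strict_bounds[OF h h' g] by simp
  moreover have "0 < deriv h p" "0 < deriv h g"
    using h' assms g by auto
  moreover have "0 < (1 - h p) ^ m" "0 < (1 - p) ^ m"
    using hp assms by simp_all
  ultimately show ?thesis
    unfolding ratio_expr_def g_def[symmetric] by simp
qed

theorem theorem4p1:
  fixes F h :: "real \<Rightarrow> real" and m :: nat
  assumes "lifetime_survival F"
    and "domination_function h"
    and "\<forall>p\<in>{0<..<1}. deriv h p > 0"
  shows "(c_less (surv_system_redundancy h m F) (surv_component_redundancy h m F) \<longleftrightarrow>
            (\<forall>p q. 0 < p \<longrightarrow> p \<le> q \<longrightarrow> q < 1 \<longrightarrow> ratio_expr h m q \<le> ratio_expr h m p))
       \<and> (c_less (surv_component_redundancy h m F) (surv_system_redundancy h m F) \<longleftrightarrow>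
            (\<forall>p q. 0 < p \<longrightarrow> p \<le> q \<longrightarrow> q < 1 \<longrightarrow> ratio_expr h m p \<le> ratio_expr h m q))"
proof -
  note S = parallel_of_systems_differentiable[OF assms(2)]
    and C = system_of_parallels_differentiable[OF assms(2)]
  have "c_less (surv_system_redundancy h m F) (surv_component_redundancy h m F) \<longleftrightarrow>
          (\<forall>p q. 0 < p \<longrightarrow> p \<le> q \<longrightarrow> q < 1 \<longrightarrow> ratio_expr h m q \<le> ratio_expr h m p)"
    unfolding surv_system_redundancy_eq surv_component_redundancy_eq c_less_comp_iff[OF assms(1) S C]
    by (intro iff_allI imp_cong refl) (simp add: log_deriv_ratio_eq_ratio_expr[OF assms(2)])
  moreover have "c_less (surv_component_redundancy h m F) (surv_system_redundancy h m F) \<longleftrightarrow>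
          (\<forall>p q. 0 < p \<longrightarrow> p \<le> q \<longrightarrow> q < 1 \<longrightarrow> ratio_expr h m p \<le> ratio_expr h m q)"
    unfolding surv_system_redundancy_eq surv_component_redundancy_eq c_less_comp_iff[OF assms(1) C S]
  proof (intro iff_allI imp_cong refl)
    fix p q :: real
    assume "0 < p" "p \<le> q" "q < 1"
    then have "0 < p" "p < 1" "0 < q" "q < 1"
      by linarith+
    then show "log_deriv (system_of_parallels h m) q / log_deriv (parallel_of_systems h m) q
                 \<le> log_deriv (system_of_parallels h m) p / log_deriv (parallel_of_systems h m) p
               \<longleftrightarrow> ratio_expr h m p \<le> ratio_expr h m q"
      by (simp add: log_deriv_ratio_eq_inverse_ratio_expr[OF assms(2)] inverse_le_iff_le
          ratio_expr_pos[OF assms(2,3)])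
  qed
  ultimately show ?thesis ..
qed

end
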